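(* Let $1\le p<\infty$ with $p\ne2$, and let $X$ be a closed subspace of $L_p(\mathbb{R})$ not containing an isomorph of $\ell_p$. Then there exists $c>0$ such that $|||f|||=\|f|_{[-c,c]}\|_p$ is an equivalent norm on $X$.
   Context: $f|_{[-c,c]}$ denotes the restriction of $f$ to $[-c,c]$. "Equivalent norm" means there is $C$ with $|||f|||\le\|f\|_p\le C|||f|||$ for all $f\in X$. *)

theory Defs
  imports "HOL-Analysis.Analysis"
begin

text \<open>Real-valued L_p(R) w.r.t. Lebesgue measure, represented by Borel functions;
  elements equal a.e. are identified only through the (semi)norm.\<close>

definition Lp_space :: "real \<Rightarrow> (real \<Rightarrow> real) set" where
  "Lp_space p = {f. f \<in> borel_measurable lborel \<and> integrable lborel (\<lambda>x. \<bar>f x\<bar> powr p)}"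

definition Lp_norm :: "real \<Rightarrow> (real \<Rightarrow> real) \<Rightarrow> real" where
  "Lp_norm p f = (integral\<^sup>L lborel (\<lambda>x. \<bar>f x\<bar> powr p)) powr (1 / p)"

text \<open>A closed linear subspace of L_p(R) (as a set of representatives, hence saturated
  under a.e. equality).\<close>

definition closed_Lp_subspace :: "real \<Rightarrow> (real \<Rightarrow> real) set \<Rightarrow> bool" where
  "closed_Lp_subspace p X \<longleftrightarrow>
     X \<subseteq> Lp_space p \<and> (\<lambda>x. 0) \<in> X \<and>
     (\<forall>f\<in>X. \<forall>g\<in>X. (\<lambda>x. f x + g x) \<in> X) \<and>
     (\<forall>f\<in>X. \<forall>c::real. (\<lambda>x. c * f x) \<in> X) \<and>
     (\<forall>f\<in>Lp_space p. (\<forall>e>0. \<exists>g\<in>X. Lp_norm p (\<lambda>x. f x - g x) < e) \<longrightarrow> f \<in> X)"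

definition lp_space :: "real \<Rightarrow> (nat \<Rightarrow> real) set" where
  "lp_space p = {a. summable (\<lambda>n. \<bar>a n\<bar> powr p)}"

definition lp_norm :: "real \<Rightarrow> (nat \<Rightarrow> real) \<Rightarrow> real" where
  "lp_norm p a = (\<Sum>n. \<bar>a n\<bar> powr p) powr (1 / p)"

text \<open>X contains an isomorph of l_p: a linear (modulo a.e. equality) isomorphic
  embedding T of l_p into X.\<close>

definition contains_lp_copy :: "real \<Rightarrow> (real \<Rightarrow> real) set \<Rightarrow> bool" where
  "contains_lp_copy p X \<longleftrightarrow>
     (\<exists>T :: (nat \<Rightarrow> real) \<Rightarrow> (real \<Rightarrow> real). \<exists>A B. A > 0 \<and> B > 0 \<and>
       (\<forall>a\<in>lp_space p. T a \<in> X \<and>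
          A * lp_norm p a \<le> Lp_norm p (T a) \<and> Lp_norm p (T a) \<le> B * lp_norm p a) \<and>
       (\<forall>a\<in>lp_space p. \<forall>b\<in>lp_space p.
          Lp_norm p (\<lambda>t. T (\<lambda>n. a n + b n) t - T a t - T b t) = 0) \<and>
       (\<forall>a\<in>lp_space p. \<forall>c::real.
          Lp_norm p (\<lambda>t. T (\<lambda>n. c * a n) t - c * T a t) = 0))"

end

theory Submission
  imports Defs
begin

text \<open>Suppose no \<open>c\<close> works. Then for all \<open>c, \<epsilon> > 0\<close> the subspace \<open>X\<close> contains some \<open>f\<close> with
  \<open>\<parallel>f\<parallel>\<^sub>p = 1\<close> and \<open>\<parallel>f|\<^bsub>[-c,c]\<^esub>\<parallel>\<^sub>p\<^sup>p < \<epsilon>\<close>. Since each single \<open>f \<in> L\<^sub>p\<close> has small mass outside a large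
  interval, a gliding hump argument yields normalised \<open>g\<^sub>n \<in> X\<close> and radii \<open>c\<^sub>n \<le> c\<^sub>n\<^sub>+\<^sub>1\<close> such that
  \<open>g\<^sub>n\<close> lives on the annulus \<open>c\<^sub>n < |x| \<le> c\<^sub>n\<^sub>+\<^sub>1\<close> up to an error that is small even after division by
  the weight \<open>2\<^sup>-\<^sup>n\<^sup>-\<^sup>1\<close>. Such a small perturbation of a disjointly supported normalised sequence
  spans \<open>\<ell>\<^sub>p\<close>: \<open>a \<mapsto> \<Sum> a\<^sub>n g\<^sub>n\<close> is an isomorphic embedding into the closed subspace \<open>X\<close>.
  The argument only uses \<open>p > 0\<close>.\<close>

section \<open>The \<open>p\<close>-th power of the \<open>L\<^sub>p\<close> norm\<close>

definition Lp_norm_pow :: "real \<Rightarrow> (real \<Rightarrow> real) \<Rightarrow> ennreal" where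
  "Lp_norm_pow p f = (\<integral>\<^sup>+x. ennreal (\<bar>f x\<bar> powr p) \<partial>lborel)"

lemma Lp_space_measurable: "f \<in> Lp_space p \<Longrightarrow> f \<in> borel_measurable lborel"
  unfolding Lp_space_def by auto

lemma Lp_space_iff_Lp_norm_pow:
  assumes "f \<in> borel_measurable lborel"
  shows "f \<in> Lp_space p \<longleftrightarrow> Lp_norm_pow p f < \<infinity>"
  using assms unfolding Lp_space_def Lp_norm_pow_def
  by (subst integrable_iff_bounded) auto

lemma Lp_norm_pow_finite: "f \<in> Lp_space p \<Longrightarrow> Lp_norm_pow p f < \<infinity>"
  using Lp_space_iff_Lp_norm_pow Lp_space_measurable by blast

lemma Lp_norm_eq_Lp_norm_pow:
  assumes "f \<in> borel_measurable lborel"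
  shows "Lp_norm p f = enn2real (Lp_norm_pow p f) powr (1/p)"
  unfolding Lp_norm_def Lp_norm_pow_def
  using assms by (subst integral_eq_nn_integral) auto

lemma Lp_norm_pow_cmult:
  assumes "f \<in> borel_measurable lborel"
  shows "Lp_norm_pow p (\<lambda>x. k * f x) = ennreal (\<bar>k\<bar> powr p) * Lp_norm_pow p f"
proof -
  have "Lp_norm_pow p (\<lambda>x. k * f x)
      = (\<integral>\<^sup>+x. ennreal (\<bar>k\<bar> powr p) * ennreal (\<bar>f x\<bar> powr p) \<partial>lborel)"
    unfolding Lp_norm_pow_def
    by (intro nn_integral_cong) (simp add: abs_mult powr_mult ennreal_mult)
  also have "\<dots> = ennreal (\<bar>k\<bar> powr p) * Lp_norm_pow p f"
    unfolding Lp_norm_pow_def using assms by (subst nn_integral_cmult) auto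
  finally show ?thesis .
qed

lemma Lp_norm_pow_mono:
  assumes "p > 0" "\<And>x. \<bar>f x\<bar> \<le> \<bar>g x\<bar>"
  shows "Lp_norm_pow p f \<le> Lp_norm_pow p g"
  unfolding Lp_norm_pow_def using assms
  by (intro nn_integral_mono ennreal_leI powr_mono2) auto

lemma Lp_norm_pow_cong_AE:
  "AE x in lborel. f x = g x \<Longrightarrow> Lp_norm_pow p f = Lp_norm_pow p g"
  unfolding Lp_norm_pow_def by (intro nn_integral_cong_AE) (auto elim!: eventually_mono)

lemma abs_add_powr_le:
  fixes u v :: real
  assumes "p > 0"
  shows "\<bar>u + v\<bar> powr p \<le> 2 powr p * (\<bar>u\<bar> powr p + \<bar>v\<bar> powr p)"
proof -
  define m where "m = max \<bar>u\<bar> \<bar>v\<bar>"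
  have "\<bar>u + v\<bar> powr p \<le> (2 * m) powr p"
    using assms by (intro powr_mono2) (auto simp: m_def)
  also have "\<dots> = 2 powr p * m powr p"
    by (simp add: m_def powr_mult)
  also have "m powr p \<le> \<bar>u\<bar> powr p + \<bar>v\<bar> powr p"
    unfolding m_def by (cases "\<bar>u\<bar> \<le> \<bar>v\<bar>") (auto simp: max_def)
  finally show ?thesis by simp
qed

lemma Lp_norm_pow_add_le:
  assumes [measurable]: "f \<in> borel_measurable lborel" "g \<in> borel_measurable lborel"
    and "p > 0"
  shows "Lp_norm_pow p (\<lambda>x. f x + g x)
           \<le> ennreal (2 powr p) * (Lp_norm_pow p f + Lp_norm_pow p g)"
proof -
  have "Lp_norm_pow p (\<lambda>x. f x + g x)
      \<le> (\<integral>\<^sup>+x. ennreal (2 powr p) * (ennreal (\<bar>f x\<bar> powr p) + ennreal (\<bar>g x\<bar> powr p)) \<partial>lborel)"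
    unfolding Lp_norm_pow_def
  proof (intro nn_integral_mono)
    fix x
    have "ennreal (\<bar>f x + g x\<bar> powr p) \<le> ennreal (2 powr p * (\<bar>f x\<bar> powr p + \<bar>g x\<bar> powr p))"
      using abs_add_powr_le[OF \<open>p > 0\<close>] by (intro ennreal_leI)
    then show "ennreal (\<bar>f x + g x\<bar> powr p)
        \<le> ennreal (2 powr p) * (ennreal (\<bar>f x\<bar> powr p) + ennreal (\<bar>g x\<bar> powr p))"
      by (simp add: ennreal_mult)
  qed
  also have "\<dots> = ennreal (2 powr p) * (Lp_norm_pow p f + Lp_norm_pow p g)"
    unfolding Lp_norm_pow_def by (subst nn_integral_cmult) (auto simp: nn_integral_add)
  finally show ?thesis .
qed

lemma Lp_norm_pow_split:
  assumes [measurable]: "f \<in> borel_measurable lborel" "J \<in> sets lborel"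
  shows "Lp_norm_pow p (\<lambda>x. indicator J x * f x) + Lp_norm_pow p (\<lambda>x. indicator (-J) x * f x)
           = Lp_norm_pow p f"
  unfolding Lp_norm_pow_def
  by (subst nn_integral_add[symmetric]) (auto intro!: nn_integral_cong simp: indicator_def)

lemma Lp_norm_pow_outside_interval_small:
  assumes [measurable]: "f \<in> borel_measurable lborel"
    and "Lp_norm_pow p f < \<infinity>" "\<epsilon> > 0"
  shows "\<exists>d \<ge> c. Lp_norm_pow p (\<lambda>x. indicator (-{-d..d}) x * f x) < ennreal \<epsilon>"
proof -
  define u where "u i x = indicator (-{-real i..real i}) x * \<bar>f x\<bar> powr p" for i :: nat and x
  have eq: "(\<integral>\<^sup>+x. norm (0 - u i x) \<partial>lborel)
      = Lp_norm_pow p (\<lambda>x. indicator (-{-real i..real i}) x * f x)" for i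
    unfolding Lp_norm_pow_def by (intro nn_integral_cong) (auto simp: u_def indicator_def)
  have "(\<lambda>i. \<integral>\<^sup>+x. norm (0 - u i x) \<partial>lborel) \<longlonglongrightarrow> 0"
  proof (rule nn_integral_dominated_convergence_norm[where w="\<lambda>x. \<bar>f x\<bar> powr p"])
    show "(\<integral>\<^sup>+x. ennreal (\<bar>f x\<bar> powr p) \<partial>lborel) < \<infinity>"
      using assms(2) unfolding Lp_norm_pow_def .
    show "AE x in lborel. (\<lambda>i. u i x) \<longlonglongrightarrow> 0"
    proof (intro AE_I2 tendsto_eventually eventually_sequentiallyI)
      fix x :: real and i assume "nat \<lceil>\<bar>x\<bar>\<rceil> \<le> i"
      then have "\<bar>x\<bar> \<le> real i"
        by (meson le_nat_iff ceiling_le_iff order_trans of_nat_le_iff real_nat_ceiling_ge)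
      then show "u i x = 0" by (auto simp: u_def indicator_def abs_le_iff)
    qed
  qed (auto simp: u_def indicator_def)
  then have "\<forall>\<^sub>F i in sequentially. Lp_norm_pow p (\<lambda>x. indicator (-{-real i..real i}) x * f x) < \<epsilon>"
    using order_tendstoD(2) \<open>\<epsilon> > 0\<close> unfolding eq by fastforce
  moreover have "\<forall>\<^sub>F i in sequentially. c \<le> real i"
    by (rule eventually_sequentiallyI[of "nat \<lceil>c\<rceil>"]) linarith
  ultimately obtain i where "c \<le> real i"
    "Lp_norm_pow p (\<lambda>x. indicator (-{-real i..real i}) x * f x) < \<epsilon>"
    using eventually_happens' by (metis (mono_tags, lifting) eventually_conj_iff sequentially_bot)
  then show ?thesis by blast
qed

section \<open>Weighted series estimates\<close>

definition dyadic_weight :: "nat \<Rightarrow> real" where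
  "dyadic_weight n = (1/2) ^ Suc n"

lemma dyadic_weight_pos: "dyadic_weight n > 0"
  unfolding dyadic_weight_def by simp

lemma dyadic_weight_le_half: "dyadic_weight n \<le> 1/2"
  unfolding dyadic_weight_def by (simp add: power_le_one)

lemma dyadic_weight_sums: "dyadic_weight sums 1"
proof -
  have "(\<lambda>n. (1/2) * (1/2::real) ^ n) sums ((1/2) * (1 / (1 - 1/2)))"
    by (intro sums_mult geometric_sums) simp
  then show ?thesis unfolding dyadic_weight_def by simp
qed

lemma ennreal_le_suminf: "(f n :: ennreal) \<le> (\<Sum>n. f n)"
  using sum_le_suminf[OF summableI, of "{n}" f] by simp

lemma le_weight_if_weighted_powr_suminf:
  fixes y w :: "nat \<Rightarrow> real" and p :: real
  defines "s \<equiv> \<Sum>n. ennreal ((y n / w n) powr p)"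
  assumes "p > 0" "y n \<ge> 0" "w n > 0" "s < \<infinity>"
  shows "y n \<le> w n * enn2real s powr (1/p)"
proof -
  have "enn2real (ennreal ((y n / w n) powr p)) \<le> enn2real s"
    unfolding s_def using assms(5) by (intro enn2real_mono ennreal_le_suminf) (simp add: s_def)
  then have "((y n / w n) powr p) powr (1/p) \<le> enn2real s powr (1/p)"
    using assms(2) by (intro powr_mono2) auto
  then show ?thesis
    using assms(2-4) by (simp add: powr_powr divide_le_eq mult.commute)
qed

lemma summable_if_weighted_powr_suminf_finite:
  fixes y w :: "nat \<Rightarrow> real"
  assumes "p > 0" "\<And>n. y n \<ge> 0" "\<And>n. w n > 0" "summable w"
    and "(\<Sum>n. ennreal ((y n / w n) powr p)) < \<infinity>"
  shows "summable y"
proof (rule summable_comparison_test'[OF summable_mult2[OF assms(4)]])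
  show "norm (y n) \<le> w n * enn2real (\<Sum>n. ennreal ((y n / w n) powr p)) powr (1/p)" for n
    using le_weight_if_weighted_powr_suminf[where y=y and w=w, OF assms(1,2,3,5)] assms(2) by simp
qed

text \<open>A pointwise substitute for Minkowski's inequality:
  \<open>\<Sum> y\<^sub>n \<le> sup (y\<^sub>n / w\<^sub>n) \<le> (\<Sum> (y\<^sub>n / w\<^sub>n)\<^sup>p)\<^sup>1\<^sup>/\<^sup>p\<close> when \<open>\<Sum> w\<^sub>n = 1\<close>.\<close>

lemma suminf_powr_le_weighted:
  fixes y w :: "nat \<Rightarrow> real"
  assumes "p > 0" "\<And>n. y n \<ge> 0" "\<And>n. w n > 0" "w sums 1" "summable y"
  shows "ennreal (suminf y powr p) \<le> (\<Sum>n. ennreal ((y n / w n) powr p))"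
proof (cases "\<Sum>n. ennreal ((y n / w n) powr p)" rule: ennreal_cases)
  case (real r)
  then have "y n \<le> w n * r powr (1/p)" for n
    using le_weight_if_weighted_powr_suminf[where y=y and w=w, OF assms(1,2,3)] by simp
  then have "suminf y \<le> (\<Sum>n. w n * r powr (1/p))"
    using assms(5) summable_mult2[OF sums_summable[OF assms(4)]] by (intro suminf_le)
  also have "\<dots> = r powr (1/p)"
    using sums_unique[OF sums_mult2[OF assms(4)]] by simp
  finally have "suminf y powr p \<le> (r powr (1/p)) powr p"
    using assms(1,2,5) by (intro powr_mono2) (auto intro: suminf_nonneg)
  then show ?thesis
    using real assms(1) by (simp add: powr_powr ennreal_leI)
qed simp

section \<open>Closed subspaces of \<open>L\<^sub>p\<close>\<close>

lemma closed_Lp_subspace_subset: "closed_Lp_subspace p X \<Longrightarrow> X \<subseteq> Lp_space p"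
  unfolding closed_Lp_subspace_def by blast

lemma closed_Lp_subspace_measurable:
  "closed_Lp_subspace p X \<Longrightarrow> f \<in> X \<Longrightarrow> f \<in> borel_measurable lborel"
  using closed_Lp_subspace_subset Lp_space_measurable by blast

lemma closed_Lp_subspace_cmult:
  "closed_Lp_subspace p X \<Longrightarrow> f \<in> X \<Longrightarrow> (\<lambda>x. k * f x) \<in> X"
  unfolding closed_Lp_subspace_def by blast

lemma closed_Lp_subspace_closure:
  "closed_Lp_subspace p X \<Longrightarrow> f \<in> Lp_space p
    \<Longrightarrow> (\<And>e. e > 0 \<Longrightarrow> \<exists>g\<in>X. Lp_norm p (\<lambda>x. f x - g x) < e) \<Longrightarrow> f \<in> X"
  unfolding closed_Lp_subspace_def by blast

lemma closed_Lp_subspace_sum: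
  fixes g :: "nat \<Rightarrow> real \<Rightarrow> real"
  assumes "closed_Lp_subspace p X" "\<And>n. g n \<in> X"
  shows "(\<lambda>x. \<Sum>n<N. a n * g n x) \<in> X"
proof (induction N)
  case 0
  then show ?case using assms(1) unfolding closed_Lp_subspace_def by simp
next
  case (Suc N)
  then show ?case
    using assms closed_Lp_subspace_cmult[OF assms(1) assms(2)]
    unfolding closed_Lp_subspace_def by simp
qed

lemma closed_Lp_subspace_AE_eq:
  assumes X: "closed_Lp_subspace p X" and "p > 0" "f \<in> X"
    and [measurable]: "g \<in> borel_measurable lborel" and "AE x in lborel. g x = f x"
  shows "g \<in> X"
proof (rule closed_Lp_subspace_closure[OF X])
  have "Lp_norm_pow p g = Lp_norm_pow p f"
    using assms(5) by (rule Lp_norm_pow_cong_AE)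
  then show "g \<in> Lp_space p"
    using Lp_norm_pow_finite closed_Lp_subspace_subset[OF X] \<open>f \<in> X\<close>
    by (auto simp: Lp_space_iff_Lp_norm_pow)
  have [measurable]: "f \<in> borel_measurable lborel"
    using closed_Lp_subspace_measurable[OF X \<open>f \<in> X\<close>] .
  have "Lp_norm_pow p (\<lambda>x. g x - f x) = Lp_norm_pow p (\<lambda>x. 0)"
    using assms(5) by (intro Lp_norm_pow_cong_AE) (auto elim: eventually_mono)
  then have "Lp_norm p (\<lambda>x. g x - f x) = 0"
    using \<open>p > 0\<close> by (simp add: Lp_norm_eq_Lp_norm_pow Lp_norm_pow_def)
  then show "\<exists>h\<in>X. Lp_norm p (\<lambda>x. g x - h x) < e" if "e > 0" for e
    using that \<open>f \<in> X\<close> by force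
qed

lemma exists_normalized_small_on_interval:
  fixes \<epsilon> :: real
  assumes "p > 0" and X: "closed_Lp_subspace p X" and "\<epsilon> > 0"
    and fails: "\<forall>C. \<exists>f\<in>X. \<not> (Lp_norm p (\<lambda>x. indicator {-c..c} x * f x) \<le> Lp_norm p f \<and>
                              Lp_norm p f \<le> C * Lp_norm p (\<lambda>x. indicator {-c..c} x * f x))"
  shows "\<exists>f\<in>X. Lp_norm_pow p f = 1 \<and> Lp_norm_pow p (\<lambda>x. indicator {-c..c} x * f x) < ennreal \<epsilon>"
proof -
  obtain f where "f \<in> X"
    and fails_f: "\<not> (Lp_norm p (\<lambda>x. indicator {-c..c} x * f x) \<le> Lp_norm p f \<and>
        Lp_norm p f \<le> (1/\<epsilon>) powr (1/p) * Lp_norm p (\<lambda>x. indicator {-c..c} x * f x))"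
    using fails by blast
  define f\<^sub>c where "f\<^sub>c x = indicator {-c..c} x * f x" for x
  have [measurable]: "f \<in> borel_measurable lborel"
    using closed_Lp_subspace_measurable[OF X \<open>f \<in> X\<close>] .
  have [measurable]: "f\<^sub>c \<in> borel_measurable lborel"
    unfolding f\<^sub>c_def by measurable
  define q r where "q = enn2real (Lp_norm_pow p f)" and "r = enn2real (Lp_norm_pow p f\<^sub>c)"
  have "q \<ge> 0" "r \<ge> 0" by (simp_all add: q_def r_def)
  have "Lp_norm_pow p f\<^sub>c \<le> Lp_norm_pow p f"
    using \<open>p > 0\<close> by (intro Lp_norm_pow_mono) (auto simp: f\<^sub>c_def indicator_def)
  moreover have "Lp_norm_pow p f < \<infinity>"
    using Lp_norm_pow_finite closed_Lp_subspace_subset[OF X] \<open>f \<in> X\<close> by blast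
  ultimately have Q: "Lp_norm_pow p f = ennreal q" "Lp_norm_pow p f\<^sub>c = ennreal r" "r \<le> q"
    unfolding q_def r_def by (auto simp: enn2real_mono less_top)
  then have "Lp_norm p f\<^sub>c \<le> Lp_norm p f"
    using \<open>p > 0\<close> \<open>q \<ge> 0\<close> \<open>r \<ge> 0\<close> by (simp add: Lp_norm_eq_Lp_norm_pow powr_mono2)
  with fails_f have "\<not> q powr (1/p) \<le> (1/\<epsilon>) powr (1/p) * r powr (1/p)"
    by (simp add: f\<^sub>c_def[symmetric] Lp_norm_eq_Lp_norm_pow q_def r_def)
  then have "\<not> q powr (1/p) \<le> (r / \<epsilon>) powr (1/p)"
    using \<open>\<epsilon> > 0\<close> \<open>r \<ge> 0\<close> by (simp add: powr_divide)
  have "r / \<epsilon> < q"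
  proof (rule ccontr)
    assume "\<not> r / \<epsilon> < q"
    then have "q powr (1/p) \<le> (r / \<epsilon>) powr (1/p)"
      using \<open>p > 0\<close> \<open>q \<ge> 0\<close> by (intro powr_mono2) auto
    with \<open>\<not> q powr (1/p) \<le> (r / \<epsilon>) powr (1/p)\<close> show False ..
  qed
  then have "q > 0"
    using divide_nonneg_pos[OF \<open>r \<ge> 0\<close> \<open>\<epsilon> > 0\<close>] by linarith
  with \<open>r / \<epsilon> < q\<close> have "r / q < \<epsilon>"
    using \<open>\<epsilon> > 0\<close> by (simp add: field_simps)
  define k where "k = 1 / q powr (1/p)"
  have k: "ennreal (\<bar>k\<bar> powr p) = ennreal (1/q)"
    using \<open>q > 0\<close> \<open>p > 0\<close> by (simp add: k_def powr_divide powr_powr)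
  have "Lp_norm_pow p (\<lambda>x. k * f x) = 1"
    using \<open>q > 0\<close> by (simp add: Lp_norm_pow_cmult k Q ennreal_mult[symmetric])
  moreover have "Lp_norm_pow p (\<lambda>x. indicator {-c..c} x * (k * f x)) < ennreal \<epsilon>"
  proof -
    have "Lp_norm_pow p (\<lambda>x. indicator {-c..c} x * (k * f x)) = Lp_norm_pow p (\<lambda>x. k * f\<^sub>c x)"
      by (simp add: f\<^sub>c_def mult.left_commute)
    also have "\<dots> = ennreal (r / q)"
      using \<open>q > 0\<close> \<open>r \<ge> 0\<close> by (simp add: Lp_norm_pow_cmult k Q ennreal_mult[symmetric])
    finally show ?thesis
      using \<open>r / q < \<epsilon>\<close> \<open>\<epsilon> > 0\<close> by (simp add: ennreal_lessI)
  qed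
  ultimately show ?thesis
    using closed_Lp_subspace_cmult[OF X \<open>f \<in> X\<close>] by blast
qed

section \<open>Small perturbations of disjointly supported sequences\<close>

definition lp_norm_pow :: "real \<Rightarrow> (nat \<Rightarrow> real) \<Rightarrow> real" where
  "lp_norm_pow p a = (\<Sum>n. \<bar>a n\<bar> powr p)"

lemma lp_norm_eq_lp_norm_pow: "lp_norm p a = lp_norm_pow p a powr (1/p)"
  unfolding lp_norm_def lp_norm_pow_def ..

lemma summable_lp_space: "a \<in> lp_space p \<Longrightarrow> summable (\<lambda>n. \<bar>a n\<bar> powr p)"
  unfolding lp_space_def by simp

lemma lp_norm_pow_nonneg: "a \<in> lp_space p \<Longrightarrow> lp_norm_pow p a \<ge> 0"
  unfolding lp_norm_pow_def by (auto intro: suminf_nonneg dest: summable_lp_space)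

lemma abs_powr_le_lp_norm_pow: "a \<in> lp_space p \<Longrightarrow> \<bar>a n\<bar> powr p \<le> lp_norm_pow p a"
  unfolding lp_norm_pow_def
  using sum_le_suminf[of "\<lambda>n. \<bar>a n\<bar> powr p" "{n}"] by (auto dest: summable_lp_space)

lemma ennreal_lp_norm_pow:
  "a \<in> lp_space p \<Longrightarrow> ennreal (lp_norm_pow p a) = (\<Sum>n. ennreal (\<bar>a n\<bar> powr p))"
  unfolding lp_norm_pow_def by (rule suminf_ennreal2[symmetric]) (auto dest: summable_lp_space)

lemma lp_space_bounded:
  assumes "a \<in> lp_space p" "p > 0"
  shows "\<bar>a n\<bar> \<le> lp_norm_pow p a powr (1/p)"
proof -
  have "(\<bar>a n\<bar> powr p) powr (1/p) \<le> lp_norm_pow p a powr (1/p)"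
    using assms abs_powr_le_lp_norm_pow by (intro powr_mono2) auto
  then show ?thesis
    using assms(2) by (simp add: powr_powr)
qed

lemma sums_tail:
  fixes f :: "nat \<Rightarrow> 'a::real_normed_vector"
  assumes "summable f"
  shows "(\<lambda>n. if N \<le> n then f n else 0) sums (suminf f - sum f {..<N})"
proof -
  have "(\<lambda>n. f n - (if n \<in> {..<N} then f n else 0)) sums (suminf f - sum f {..<N})"
    by (intro sums_diff summable_sums assms sums_If_finite_set) simp
  moreover have "(\<lambda>n. f n - (if n \<in> {..<N} then f n else 0)) = (\<lambda>n. if N \<le> n then f n else 0)"
    by auto
  ultimately show ?thesis by simp
qed

lemma lp_space_tail:
  fixes N :: nat
  assumes "a \<in> lp_space p"
  defines "b \<equiv> \<lambda>n. if N \<le> n then a n else 0"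
  shows "b \<in> lp_space p" "lp_norm_pow p b = lp_norm_pow p a - (\<Sum>n<N. \<bar>a n\<bar> powr p)"
proof -
  have "(\<lambda>n. \<bar>b n\<bar> powr p) = (\<lambda>n. if N \<le> n then \<bar>a n\<bar> powr p else 0)"
    by (auto simp: b_def)
  then have "(\<lambda>n. \<bar>b n\<bar> powr p) sums (lp_norm_pow p a - (\<Sum>n<N. \<bar>a n\<bar> powr p))"
    unfolding lp_norm_pow_def using sums_tail[OF summable_lp_space[OF assms(1)]] by simp
  then show "b \<in> lp_space p" "lp_norm_pow p b = lp_norm_pow p a - (\<Sum>n<N. \<bar>a n\<bar> powr p)"
    by (auto simp: lp_space_def lp_norm_pow_def sums_iff)
qed

lemma weighted_Lp_norm_pow_suminf_le:
  assumes [measurable]: "\<And>n. e n \<in> borel_measurable lborel" and "\<kappa> \<ge> 0"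
    and e: "\<And>n. Lp_norm_pow p (e n) \<le> ennreal (\<kappa> * dyadic_weight n powr p * dyadic_weight n)"
  shows "(\<Sum>n. Lp_norm_pow p (\<lambda>x. e n x / dyadic_weight n)) \<le> ennreal \<kappa>"
proof -
  have "Lp_norm_pow p (\<lambda>x. e n x / dyadic_weight n) \<le> ennreal (\<kappa> * dyadic_weight n)" for n
  proof -
    have w: "dyadic_weight n > 0" by (rule dyadic_weight_pos)
    have "Lp_norm_pow p (\<lambda>x. e n x / dyadic_weight n)
        = ennreal ((1 / dyadic_weight n) powr p) * Lp_norm_pow p (e n)"
      using Lp_norm_pow_cmult[where f="e n" and k="1 / dyadic_weight n" and p=p] w by simp
    also have "\<dots> \<le> ennreal ((1 / dyadic_weight n) powr p)
                    * ennreal (\<kappa> * dyadic_weight n powr p * dyadic_weight n)"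
      by (intro mult_left_mono e) simp
    also have "\<dots> = ennreal (\<kappa> * dyadic_weight n)"
      using w \<open>\<kappa> \<ge> 0\<close> by (simp add: ennreal_mult[symmetric] powr_divide field_simps)
    finally show ?thesis .
  qed
  then have "(\<Sum>n. Lp_norm_pow p (\<lambda>x. e n x / dyadic_weight n)) \<le> (\<Sum>n. ennreal (\<kappa> * dyadic_weight n))"
    by (intro suminf_le summableI)
  also have "\<dots> = ennreal \<kappa>"
    using sums_unique[OF sums_mult[OF dyadic_weight_sums, of \<kappa>]] dyadic_weight_pos \<open>\<kappa> \<ge> 0\<close>
      summable_mult[OF sums_summable[OF dyadic_weight_sums], of \<kappa>]
    by (subst suminf_ennreal2) (auto intro: less_imp_le mult_nonneg_nonneg)
  finally show ?thesis .
qed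

definition perturbation_const :: "real \<Rightarrow> real" where
  "perturbation_const p = 2 powr (-p) / 4"

lemma perturbation_const_pos: "perturbation_const p > 0"
  unfolding perturbation_const_def by simp

text \<open>Since the humps \<open>h\<^sub>n\<close> have disjoint supports, \<open>\<parallel>\<Sum> a\<^sub>n h\<^sub>n\<parallel>\<^sub>p\<^sup>p = \<Sum> |a\<^sub>n|\<^sup>p \<parallel>h\<^sub>n\<parallel>\<^sub>p\<^sup>p\<close>, and the
  remainders only perturb this. Pointwise summability of the remainders makes \<open>\<Sum> a\<^sub>n g\<^sub>n\<close>
  converge everywhere, not just almost everywhere.\<close>

locale almost_disjoint_sequence =
  fixes p :: real and g :: "nat \<Rightarrow> real \<Rightarrow> real" and A :: "nat \<Rightarrow> real set"
  assumes p_pos: "p > 0"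
    and measurable_g [measurable]: "\<And>n. g n \<in> borel_measurable lborel"
    and sets_A [measurable]: "\<And>n. A n \<in> sets lborel"
    and disjoint_A: "disjoint_family A"
    and hump_ge: "\<And>n. ennreal (1/2) \<le> Lp_norm_pow p (\<lambda>x. indicator (A n) x * g n x)"
    and hump_le: "\<And>n. Lp_norm_pow p (\<lambda>x. indicator (A n) x * g n x) \<le> 1"
    and remainder_le: "\<And>n. Lp_norm_pow p (\<lambda>x. indicator (-A n) x * g n x)
                         \<le> ennreal (perturbation_const p * dyadic_weight n powr p * dyadic_weight n)"
    and summable_remainder: "\<And>x. summable (\<lambda>n. \<bar>indicator (-A n) x * g n x\<bar>)"
begin

definition hump :: "nat \<Rightarrow> real \<Rightarrow> real" where
  "hump n x = indicator (A n) x * g n x"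

definition remainder :: "nat \<Rightarrow> real \<Rightarrow> real" where
  "remainder n x = indicator (-A n) x * g n x"

definition embed :: "(nat \<Rightarrow> real) \<Rightarrow> real \<Rightarrow> real" where
  "embed a x = (\<Sum>n. a n * g n x)"

definition hump_series :: "(nat \<Rightarrow> real) \<Rightarrow> real \<Rightarrow> real" where
  "hump_series a x = (\<Sum>n. a n * hump n x)"

definition remainder_series :: "(nat \<Rightarrow> real) \<Rightarrow> real \<Rightarrow> real" where
  "remainder_series a x = (\<Sum>n. a n * remainder n x)"

lemma measurable_hump [measurable]: "hump n \<in> borel_measurable lborel"
  unfolding hump_def by measurable

lemma measurable_remainder [measurable]: "remainder n \<in> borel_measurable lborel"
  unfolding remainder_def by measurable

lemma measurable_embed [measurable]: "embed a \<in> borel_measurable lborel"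
  unfolding embed_def by measurable

lemma measurable_hump_series [measurable]: "hump_series a \<in> borel_measurable lborel"
  unfolding hump_series_def by measurable

lemma measurable_remainder_series [measurable]: "remainder_series a \<in> borel_measurable lborel"
  unfolding remainder_series_def by measurable

lemma g_eq_hump_plus_remainder: "g n x = hump n x + remainder n x"
  by (simp add: hump_def remainder_def indicator_def)

lemma hump_eq_0_except: obtains m where "\<And>n. n \<noteq> m \<Longrightarrow> hump n x = 0"
proof (cases "\<exists>m. x \<in> A m")
  case True
  then obtain m where "x \<in> A m" by blast
  then have "x \<notin> A n" if "n \<noteq> m" for n
    using disjoint_A that unfolding disjoint_family_on_def by blast
  then show ?thesis
    using that[of m] by (simp add: hump_def)
qed (auto simp: hump_def)

lemma hump_series_sums: obtains m where "(\<lambda>n. a n * hump n x) sums (a m * hump m x)"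
  "\<And>n. n \<noteq> m \<Longrightarrow> hump n x = 0"
proof -
  obtain m where m: "\<And>n. n \<noteq> m \<Longrightarrow> hump n x = 0"
    using hump_eq_0_except by blast
  then have "(\<lambda>n. a n * hump n x) = (\<lambda>n. if n = m then a m * hump m x else 0)"
    by auto
  then show ?thesis
    using that m sums_single[of m "\<lambda>_. a m * hump m x"] by simp
qed

lemma summable_remainder_series_abs:
  assumes "a \<in> lp_space p"
  shows "summable (\<lambda>n. \<bar>a n * remainder n x\<bar>)"
proof (rule summable_comparison_test')
  show "summable (\<lambda>n. lp_norm_pow p a powr (1/p) * \<bar>remainder n x\<bar>)"
    using summable_remainder[of x] by (intro summable_mult) (simp add: remainder_def)
  show "norm \<bar>a n * remainder n x\<bar> \<le> lp_norm_pow p a powr (1/p) * \<bar>remainder n x\<bar>" for n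
    using lp_space_bounded[OF assms p_pos, of n] by (simp add: abs_mult mult_right_mono)
qed

lemma summable_embed:
  assumes "a \<in> lp_space p"
  shows "summable (\<lambda>n. a n * g n x)"
proof -
  obtain m where "(\<lambda>n. a n * hump n x) sums (a m * hump m x)"
    using hump_series_sums by blast
  then have "summable (\<lambda>n. a n * hump n x + a n * remainder n x)"
    using summable_rabs_cancel[OF summable_remainder_series_abs[OF assms]]
    by (intro summable_add) (auto simp: sums_iff)
  then show ?thesis
    by (simp add: g_eq_hump_plus_remainder distrib_left)
qed

lemma embed_eq_hump_series_plus_remainder_series:
  assumes "a \<in> lp_space p"
  shows "embed a = (\<lambda>x. hump_series a x + remainder_series a x)"
proof
  fix x
  obtain m where "(\<lambda>n. a n * hump n x) sums (a m * hump m x)"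
    using hump_series_sums by blast
  then show "embed a x = hump_series a x + remainder_series a x"
    unfolding embed_def hump_series_def remainder_series_def
    using summable_rabs_cancel[OF summable_remainder_series_abs[OF assms]]
    by (subst suminf_add) (auto simp: sums_iff g_eq_hump_plus_remainder distrib_left)
qed

lemma Lp_norm_pow_hump_ge: "ennreal (1/2) \<le> Lp_norm_pow p (hump n)"
  unfolding hump_def[abs_def] by (rule hump_ge)

lemma Lp_norm_pow_hump_le: "Lp_norm_pow p (hump n) \<le> 1"
  unfolding hump_def[abs_def] by (rule hump_le)

lemma Lp_norm_pow_hump_series:
  "Lp_norm_pow p (hump_series a) = (\<Sum>n. ennreal (\<bar>a n\<bar> powr p) * Lp_norm_pow p (hump n))"
proof -
  have "ennreal (\<bar>hump_series a x\<bar> powr p) = (\<Sum>n. ennreal (\<bar>a n\<bar> powr p * \<bar>hump n x\<bar> powr p))"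
    for x
  proof -
    obtain m where m: "(\<lambda>n. a n * hump n x) sums (a m * hump m x)"
      and zero: "\<And>n. n \<noteq> m \<Longrightarrow> hump n x = 0"
      using hump_series_sums by blast
    have "(\<lambda>n. ennreal (\<bar>a n\<bar> powr p * \<bar>hump n x\<bar> powr p))
        = (\<lambda>n. if n = m then ennreal (\<bar>a m\<bar> powr p * \<bar>hump m x\<bar> powr p) else 0)"
      using zero by auto
    then show ?thesis
      using m sums_single[of m "\<lambda>_. ennreal (\<bar>a m\<bar> powr p * \<bar>hump m x\<bar> powr p)"]
      by (simp add: hump_series_def sums_iff abs_mult powr_mult)
  qed
  then have "Lp_norm_pow p (hump_series a)
      = (\<Sum>n. \<integral>\<^sup>+x. ennreal (\<bar>a n\<bar> powr p) * ennreal (\<bar>hump n x\<bar> powr p) \<partial>lborel)"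
    unfolding Lp_norm_pow_def by (subst nn_integral_suminf[symmetric]) (auto simp: ennreal_mult)
  also have "\<dots> = (\<Sum>n. ennreal (\<bar>a n\<bar> powr p) * Lp_norm_pow p (hump n))"
    unfolding Lp_norm_pow_def by (subst nn_integral_cmult) auto
  finally show ?thesis .
qed

lemma Lp_norm_pow_hump_series_bounds:
  assumes "a \<in> lp_space p"
  shows "ennreal (lp_norm_pow p a / 2) \<le> Lp_norm_pow p (hump_series a)"
    and "Lp_norm_pow p (hump_series a) \<le> ennreal (lp_norm_pow p a)"
proof -
  have "ennreal (lp_norm_pow p a / 2) = ennreal (1/2) * ennreal (lp_norm_pow p a)"
    by (subst ennreal_mult[symmetric]) (use lp_norm_pow_nonneg[OF assms] in auto)
  also have "\<dots> = (\<Sum>n. ennreal (\<bar>a n\<bar> powr p) * ennreal (1/2))"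
    unfolding ennreal_lp_norm_pow[OF assms]
    by (subst ennreal_suminf_cmult[symmetric]) (simp add: mult.commute)
  also have "\<dots> \<le> Lp_norm_pow p (hump_series a)"
    unfolding Lp_norm_pow_hump_series
    by (intro suminf_le summableI mult_left_mono Lp_norm_pow_hump_ge) auto
  finally show "ennreal (lp_norm_pow p a / 2) \<le> Lp_norm_pow p (hump_series a)" .
  have "Lp_norm_pow p (hump_series a) \<le> (\<Sum>n. ennreal (\<bar>a n\<bar> powr p) * 1)"
    unfolding Lp_norm_pow_hump_series
    by (intro suminf_le summableI mult_left_mono Lp_norm_pow_hump_le) auto
  then show "Lp_norm_pow p (hump_series a) \<le> ennreal (lp_norm_pow p a)"
    using ennreal_lp_norm_pow[OF assms] by simp
qed

lemma Lp_norm_pow_remainder_series_le: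
  assumes a: "a \<in> lp_space p"
  shows "Lp_norm_pow p (remainder_series a) \<le> ennreal (lp_norm_pow p a * perturbation_const p)"
proof -
  define S where "S = lp_norm_pow p a"
  have "S \<ge> 0" unfolding S_def using lp_norm_pow_nonneg[OF a] .
  have pointwise: "ennreal (\<bar>remainder_series a x\<bar> powr p)
      \<le> ennreal S * (\<Sum>n. ennreal (\<bar>remainder n x / dyadic_weight n\<bar> powr p))" for x
  proof -
    have "\<bar>remainder_series a x\<bar> \<le> (\<Sum>n. \<bar>a n * remainder n x\<bar>)"
      unfolding remainder_series_def by (rule summable_rabs[OF summable_remainder_series_abs[OF a]])
    then have "ennreal (\<bar>remainder_series a x\<bar> powr p)
        \<le> ennreal ((\<Sum>n. \<bar>a n * remainder n x\<bar>) powr p)"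
      using p_pos by (intro ennreal_leI powr_mono2) auto
    also have "\<dots> \<le> (\<Sum>n. ennreal ((\<bar>a n * remainder n x\<bar> / dyadic_weight n) powr p))"
      by (rule suminf_powr_le_weighted[OF p_pos _ dyadic_weight_pos dyadic_weight_sums
            summable_remainder_series_abs[OF a]]) simp
    also have "\<dots> \<le> (\<Sum>n. ennreal S * ennreal (\<bar>remainder n x / dyadic_weight n\<bar> powr p))"
    proof (intro suminf_le summableI)
      fix n
      have "(\<bar>a n * remainder n x\<bar> / dyadic_weight n) powr p
          = \<bar>a n\<bar> powr p * \<bar>remainder n x / dyadic_weight n\<bar> powr p"
        using dyadic_weight_pos[of n] by (simp add: abs_mult powr_mult[symmetric] mult.assoc)
      also have "\<dots> \<le> S * \<bar>remainder n x / dyadic_weight n\<bar> powr p"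
        unfolding S_def using abs_powr_le_lp_norm_pow[OF a] by (intro mult_right_mono) auto
      finally show "ennreal ((\<bar>a n * remainder n x\<bar> / dyadic_weight n) powr p)
          \<le> ennreal S * ennreal (\<bar>remainder n x / dyadic_weight n\<bar> powr p)"
        using \<open>S \<ge> 0\<close> by (simp add: ennreal_mult[symmetric] ennreal_leI)
    qed
    finally show ?thesis
      by simp
  qed
  have "Lp_norm_pow p (remainder_series a)
      \<le> (\<integral>\<^sup>+x. ennreal S * (\<Sum>n. ennreal (\<bar>remainder n x / dyadic_weight n\<bar> powr p)) \<partial>lborel)"
    unfolding Lp_norm_pow_def by (intro nn_integral_mono pointwise)
  also have "\<dots> = ennreal S * (\<Sum>n. Lp_norm_pow p (\<lambda>x. remainder n x / dyadic_weight n))"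
    unfolding Lp_norm_pow_def by (simp add: nn_integral_cmult nn_integral_suminf)
  also have "\<dots> \<le> ennreal S * ennreal (perturbation_const p)"
    using less_imp_le[OF perturbation_const_pos] remainder_le
    by (intro mult_left_mono weighted_Lp_norm_pow_suminf_le) (auto simp: remainder_def[abs_def])
  finally show ?thesis
    using \<open>S \<ge> 0\<close> less_imp_le[OF perturbation_const_pos] by (simp add: S_def ennreal_mult)
qed

lemma Lp_norm_pow_embed_le:
  assumes a: "a \<in> lp_space p"
  shows "Lp_norm_pow p (embed a) \<le> ennreal (2 powr p * (1 + perturbation_const p) * lp_norm_pow p a)"
proof -
  have S: "lp_norm_pow p a \<ge> 0" and \<kappa>: "perturbation_const p \<ge> 0"
    using lp_norm_pow_nonneg[OF a] less_imp_le[OF perturbation_const_pos] .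
  have "Lp_norm_pow p (embed a)
      \<le> ennreal (2 powr p) * (Lp_norm_pow p (hump_series a) + Lp_norm_pow p (remainder_series a))"
    unfolding embed_eq_hump_series_plus_remainder_series[OF a] using p_pos by (intro Lp_norm_pow_add_le) auto
  also have "\<dots> \<le> ennreal (2 powr p)
                  * (ennreal (lp_norm_pow p a) + ennreal (lp_norm_pow p a * perturbation_const p))"
    using Lp_norm_pow_hump_series_bounds(2)[OF a] Lp_norm_pow_remainder_series_le[OF a]
    by (intro mult_left_mono add_mono) auto
  also have "\<dots> = ennreal (2 powr p * (1 + perturbation_const p) * lp_norm_pow p a)"
    using S \<kappa> by (simp add: ennreal_mult[symmetric] algebra_simps)
  finally show ?thesis .
qed

text \<open>The constant \<open>perturbation_const p = 2\<^sup>-\<^sup>p/4\<close> is chosen so that the perturbation, amplified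
  by the factor \<open>2\<^sup>p\<close> of the quasi-triangle inequality, costs at most half of
  \<open>\<parallel>\<Sum> a\<^sub>n h\<^sub>n\<parallel>\<^sub>p\<^sup>p \<ge> \<parallel>a\<parallel>\<^sub>p\<^sup>p/2\<close>.\<close>

lemma Lp_norm_pow_embed_ge:
  assumes a: "a \<in> lp_space p"
  shows "ennreal (perturbation_const p * lp_norm_pow p a) \<le> Lp_norm_pow p (embed a)"
proof (cases "Lp_norm_pow p (embed a)" rule: ennreal_cases)
  case (real t)
  define S where "S = lp_norm_pow p a"
  have "S \<ge> 0" unfolding S_def using lp_norm_pow_nonneg[OF a] .
  have \<kappa>: "perturbation_const p \<ge> 0"
    using less_imp_le[OF perturbation_const_pos] .
  have "hump_series a = (\<lambda>x. embed a x + - remainder_series a x)"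
    unfolding embed_eq_hump_series_plus_remainder_series[OF a] by simp
  have "ennreal (S / 2) \<le> Lp_norm_pow p (hump_series a)"
    unfolding S_def by (rule Lp_norm_pow_hump_series_bounds(1)[OF a])
  also have "\<dots> \<le> ennreal (2 powr p) * (Lp_norm_pow p (embed a) + Lp_norm_pow p (\<lambda>x. - remainder_series a x))"
    unfolding \<open>hump_series a = _\<close> by (rule Lp_norm_pow_add_le[OF _ _ p_pos]) measurable
  also have "\<dots> \<le> ennreal (2 powr p) * (ennreal t + ennreal (S * perturbation_const p))"
    using Lp_norm_pow_remainder_series_le[OF a] real
    by (intro mult_left_mono add_mono) (auto simp: Lp_norm_pow_def S_def)
  also have "\<dots> = ennreal (2 powr p * (t + S * perturbation_const p))"
    using real \<open>S \<ge> 0\<close> \<kappa> by (simp add: ennreal_mult)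
  finally have "S / 2 \<le> 2 powr p * (t + S * perturbation_const p)"
    using real \<open>S \<ge> 0\<close> \<kappa> by (subst (asm) ennreal_le_iff) auto
  then have "S / 2 \<le> 2 powr p * t + S * (2 powr p * perturbation_const p)"
    by (simp add: algebra_simps)
  moreover have "2 powr p * perturbation_const p = 1/4"
    by (simp add: perturbation_const_def powr_minus)
  ultimately have "2 powr (-p) * (S / 4) \<le> 2 powr (-p) * (2 powr p * t)"
    by (intro mult_left_mono) auto
  also have "\<dots> = t"
    by (simp add: powr_minus)
  finally show ?thesis
    using real by (simp add: S_def perturbation_const_def mult.commute ennreal_leI)
qed simp

lemma Lp_norm_pow_embed_finite: "a \<in> lp_space p \<Longrightarrow> Lp_norm_pow p (embed a) < \<infinity>"
  using Lp_norm_pow_embed_le[of a] by (simp add: le_less_trans)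

lemma embed_in_Lp_space: "a \<in> lp_space p \<Longrightarrow> embed a \<in> Lp_space p"
  using Lp_norm_pow_embed_finite by (simp add: Lp_space_iff_Lp_norm_pow)

lemma Lp_norm_embed_bounds:
  assumes a: "a \<in> lp_space p"
  shows "perturbation_const p powr (1/p) * lp_norm p a \<le> Lp_norm p (embed a)"
    and "Lp_norm p (embed a) \<le> (2 powr p * (1 + perturbation_const p)) powr (1/p) * lp_norm p a"
proof -
  define t where "t = enn2real (Lp_norm_pow p (embed a))"
  have Q: "Lp_norm_pow p (embed a) = ennreal t" "t \<ge> 0"
    using Lp_norm_pow_embed_finite[OF a] by (simp_all add: t_def less_top)
  have S: "lp_norm_pow p a \<ge> 0" and \<kappa>: "perturbation_const p \<ge> 0"
    using lp_norm_pow_nonneg[OF a] less_imp_le[OF perturbation_const_pos] .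
  have Lp: "Lp_norm p (embed a) = t powr (1/p)"
    using Q by (simp add: Lp_norm_eq_Lp_norm_pow)
  have "(perturbation_const p * lp_norm_pow p a) powr (1/p) \<le> t powr (1/p)"
    using Lp_norm_pow_embed_ge[OF a] Q S \<kappa> p_pos by (intro powr_mono2) auto
  then show "perturbation_const p powr (1/p) * lp_norm p a \<le> Lp_norm p (embed a)"
    using S \<kappa> by (simp add: Lp lp_norm_eq_lp_norm_pow powr_mult)
  have "t powr (1/p) \<le> (2 powr p * (1 + perturbation_const p) * lp_norm_pow p a) powr (1/p)"
    using Lp_norm_pow_embed_le[OF a] Q S \<kappa> p_pos by (intro powr_mono2) auto
  then show "Lp_norm p (embed a) \<le> (2 powr p * (1 + perturbation_const p)) powr (1/p) * lp_norm p a"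
    using S \<kappa> by (simp add: Lp lp_norm_eq_lp_norm_pow powr_mult)
qed

lemma embed_add:
  assumes "a \<in> lp_space p" "b \<in> lp_space p"
  shows "embed (\<lambda>n. a n + b n) x = embed a x + embed b x"
  unfolding embed_def using summable_embed[OF assms(1)] summable_embed[OF assms(2)]
  by (simp add: suminf_add distrib_right)

lemma embed_cmult:
  assumes "a \<in> lp_space p"
  shows "embed (\<lambda>n. c * a n) x = c * embed a x"
  unfolding embed_def using summable_embed[OF assms]
  by (simp add: suminf_mult[symmetric] mult.assoc)

lemma embed_minus_partial_sum:
  fixes N :: nat
  assumes "a \<in> lp_space p"
  shows "embed a x - (\<Sum>n<N. a n * g n x) = embed (\<lambda>n. if N \<le> n then a n else 0) x"
proof -
  have "(\<lambda>n. (if N \<le> n then a n else 0) * g n x) = (\<lambda>n. if N \<le> n then a n * g n x else 0)"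
    by auto
  then show ?thesis
    unfolding embed_def using sums_tail[OF summable_embed[OF assms]] by (simp add: sums_iff)
qed

lemma embed_in_closed_subspace:
  assumes X: "closed_Lp_subspace p X" and gX: "\<And>n. g n \<in> X" and a: "a \<in> lp_space p"
  shows "embed a \<in> X"
proof (rule closed_Lp_subspace_closure[OF X embed_in_Lp_space[OF a]])
  fix \<epsilon> :: real
  assume "\<epsilon> > 0"
  define B where "B = (2 powr p * (1 + perturbation_const p)) powr (1/p)"
  have "B > 0"
    using perturbation_const_pos[of p] by (simp add: B_def)
  have "(\<lambda>N. lp_norm_pow p a - (\<Sum>n<N. \<bar>a n\<bar> powr p)) \<longlonglongrightarrow> lp_norm_pow p a - lp_norm_pow p a"
    unfolding lp_norm_pow_def by (intro tendsto_diff tendsto_const summable_LIMSEQ summable_lp_space a)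
  then have "\<forall>\<^sub>F N in sequentially. lp_norm_pow p a - (\<Sum>n<N. \<bar>a n\<bar> powr p) < (\<epsilon> / B) powr p"
    using \<open>\<epsilon> > 0\<close> \<open>B > 0\<close> by (intro order_tendstoD(2)) auto
  then obtain N where N: "lp_norm_pow p a - (\<Sum>n<N. \<bar>a n\<bar> powr p) < (\<epsilon> / B) powr p"
    unfolding eventually_sequentially by blast
  define b where "b = (\<lambda>n. if N \<le> n then a n else 0)"
  have b: "b \<in> lp_space p" "lp_norm_pow p b < (\<epsilon> / B) powr p"
    using lp_space_tail[OF a, of N] N by (simp_all add: b_def)
  have "Lp_norm p (\<lambda>x. embed a x - (\<Sum>n<N. a n * g n x)) = Lp_norm p (embed b)"
    by (simp add: embed_minus_partial_sum[OF a] b_def)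
  also have "\<dots> \<le> B * lp_norm p b"
    unfolding B_def by (rule Lp_norm_embed_bounds(2)[OF b(1)])
  also have "\<dots> < B * (\<epsilon> / B)"
  proof -
    have "lp_norm p b < ((\<epsilon> / B) powr p) powr (1/p)"
      unfolding lp_norm_eq_lp_norm_pow
      using b lp_norm_pow_nonneg p_pos by (intro powr_less_mono2) auto
    then have "lp_norm p b < \<epsilon> / B"
      using \<open>B > 0\<close> \<open>\<epsilon> > 0\<close> p_pos by (simp add: powr_powr)
    then show ?thesis
      using \<open>B > 0\<close> by (rule mult_strict_left_mono)
  qed
  finally show "\<exists>h\<in>X. Lp_norm p (\<lambda>x. embed a x - h x) < \<epsilon>"
    using \<open>B > 0\<close> closed_Lp_subspace_sum[OF X gX, where a=a and N=N] by auto
qed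

lemma contains_lp_copy:
  assumes "closed_Lp_subspace p X" "\<And>n. g n \<in> X"
  shows "contains_lp_copy p X"
  unfolding contains_lp_copy_def
proof (intro exI conjI ballI allI)
  show "perturbation_const p powr (1/p) > 0" "(2 powr p * (1 + perturbation_const p)) powr (1/p) > 0"
    using perturbation_const_pos[of p] by simp_all
next
  fix a assume a: "a \<in> lp_space p"
  show "embed a \<in> X"
    using embed_in_closed_subspace[OF assms a] .
  show "perturbation_const p powr (1/p) * lp_norm p a \<le> Lp_norm p (embed a)"
    "Lp_norm p (embed a) \<le> (2 powr p * (1 + perturbation_const p)) powr (1/p) * lp_norm p a"
    using Lp_norm_embed_bounds[OF a] by auto
  fix b c assume b: "b \<in> lp_space p"
  show "Lp_norm p (\<lambda>x. embed (\<lambda>n. a n + b n) x - embed a x - embed b x) = 0"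
    "Lp_norm p (\<lambda>x. embed (\<lambda>n. c * a n) x - c * embed a x) = 0"
    using p_pos by (simp_all add: embed_add[OF a b] embed_cmult[OF a] Lp_norm_def)
qed

end

text \<open>The remainders are summable outside a common null set; modifying every \<open>g\<^sub>n\<close> on it
  does not leave \<open>X\<close>.\<close>

lemma contains_lp_copy_if_almost_disjoint:
  fixes g :: "nat \<Rightarrow> real \<Rightarrow> real"
  assumes "p > 0" and X: "closed_Lp_subspace p X" and gX: "\<And>n. g n \<in> X"
    and A [measurable]: "\<And>n. A n \<in> sets lborel" and "disjoint_family A"
    and hump_ge: "\<And>n. ennreal (1/2) \<le> Lp_norm_pow p (\<lambda>x. indicator (A n) x * g n x)"
    and hump_le: "\<And>n. Lp_norm_pow p (\<lambda>x. indicator (A n) x * g n x) \<le> 1"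
    and remainder_le: "\<And>n. Lp_norm_pow p (\<lambda>x. indicator (-A n) x * g n x)
                         \<le> ennreal (perturbation_const p * dyadic_weight n powr p * dyadic_weight n)"
  shows "contains_lp_copy p X"
proof -
  have [measurable]: "g n \<in> borel_measurable lborel" for n
    using closed_Lp_subspace_measurable[OF X gX] .
  define r where "r n x = indicator (-A n) x * g n x" for n x
  define R where "R x = (\<Sum>n. ennreal (\<bar>r n x / dyadic_weight n\<bar> powr p))" for x
  define Z where "Z = {x. R x = \<infinity>}"
  have [measurable]: "R \<in> borel_measurable lborel" "Z \<in> sets lborel"
    unfolding R_def Z_def r_def by measurable
  have "integral\<^sup>N lborel R = (\<Sum>n. Lp_norm_pow p (\<lambda>x. r n x / dyadic_weight n))"
    unfolding R_def Lp_norm_pow_def by (rule nn_integral_suminf) (measurable, simp add: r_def)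
  also have "\<dots> \<le> ennreal (perturbation_const p)"
    using less_imp_le[OF perturbation_const_pos] remainder_le
    by (intro weighted_Lp_norm_pow_suminf_le) (auto simp: r_def[abs_def])
  finally have "integral\<^sup>N lborel R \<noteq> \<infinity>"
    using neq_top_trans[OF ennreal_neq_top] by simp
  then have "AE x in lborel. x \<notin> Z"
    unfolding Z_def using nn_integral_PInf_AE[of R lborel] by simp
  define g' where "g' n x = indicator (-Z) x * g n x" for n x
  have [measurable]: "g' n \<in> borel_measurable lborel" for n
    unfolding g'_def by measurable
  have AE: "AE x in lborel. g' n x = g n x" for n
    using \<open>AE x in lborel. x \<notin> Z\<close> by eventually_elim (simp add: g'_def)
  have AE_indicator: "AE x in lborel. indicator B x * g' n x = indicator B x * g n x" for B n
    using AE[of n] by eventually_elim simp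
  interpret almost_disjoint_sequence p g' A
  proof
    show "ennreal (1/2) \<le> Lp_norm_pow p (\<lambda>x. indicator (A n) x * g' n x)"
      "Lp_norm_pow p (\<lambda>x. indicator (A n) x * g' n x) \<le> 1" for n
      using hump_ge[of n] hump_le[of n] Lp_norm_pow_cong_AE[OF AE_indicator[of "A n" n]] by simp_all
    show "Lp_norm_pow p (\<lambda>x. indicator (-A n) x * g' n x)
        \<le> ennreal (perturbation_const p * dyadic_weight n powr p * dyadic_weight n)" for n
      using remainder_le[of n] Lp_norm_pow_cong_AE[OF AE_indicator[of "-A n" n]] by simp
    show "summable (\<lambda>n. \<bar>indicator (-A n) x * g' n x\<bar>)" for x
    proof (cases "x \<in> Z")
      case False
      have "\<bar>dyadic_weight n\<bar> = dyadic_weight n" for n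
        using dyadic_weight_pos[of n] by simp
      with False have "(\<Sum>n. ennreal ((\<bar>r n x\<bar> / dyadic_weight n) powr p)) < \<infinity>"
        by (simp add: Z_def R_def less_top)
      then have "summable (\<lambda>n. \<bar>r n x\<bar>)"
        by (rule summable_if_weighted_powr_suminf_finite[OF \<open>p > 0\<close> abs_ge_zero dyadic_weight_pos
              sums_summable[OF dyadic_weight_sums]])
      with False show ?thesis
        by (simp add: g'_def r_def)
    qed (simp add: g'_def)
  qed (use \<open>p > 0\<close> \<open>disjoint_family A\<close> A in auto)
  show ?thesis
    using closed_Lp_subspace_AE_eq[OF X \<open>p > 0\<close> gX _ AE] by (intro contains_lp_copy[OF X]) simp
qed

section \<open>The gliding hump\<close>

lemma Lp_norm_pow_annulus:
  fixes G :: "real \<Rightarrow> real"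
  assumes [measurable]: "G \<in> borel_measurable lborel" and "a \<le> b" "Lp_norm_pow p G = 1"
    and inner: "Lp_norm_pow p (\<lambda>x. indicator {-a..a} x * G x) < ennreal \<delta>"
    and outer: "Lp_norm_pow p (\<lambda>x. indicator (-{-b..b}) x * G x) < ennreal \<delta>"
    and "\<delta> \<le> 1/4"
  defines "J \<equiv> {x. a < \<bar>x\<bar> \<and> \<bar>x\<bar> \<le> b}"
  shows "ennreal (1/2) \<le> Lp_norm_pow p (\<lambda>x. indicator J x * G x)"
    and "Lp_norm_pow p (\<lambda>x. indicator J x * G x) \<le> 1"
    and "Lp_norm_pow p (\<lambda>x. indicator (-J) x * G x) < ennreal (2 * \<delta>)"
proof -
  have J [measurable]: "J \<in> sets lborel"
    unfolding J_def by measurable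
  have split: "Lp_norm_pow p (\<lambda>x. indicator J x * G x) + Lp_norm_pow p (\<lambda>x. indicator (-J) x * G x) = 1"
    using Lp_norm_pow_split[OF assms(1) J, of p] \<open>Lp_norm_pow p G = 1\<close> by simp
  have "(\<lambda>x. indicator {-a..a} x * (indicator (-J) x * G x)) = (\<lambda>x. indicator {-a..a} x * G x)"
    "(\<lambda>x. indicator (-{-a..a}) x * (indicator (-J) x * G x)) = (\<lambda>x. indicator (-{-b..b}) x * G x)"
    using \<open>a \<le> b\<close> by (auto simp: fun_eq_iff J_def abs_le_iff split: split_indicator)
  then have "Lp_norm_pow p (\<lambda>x. indicator (-J) x * G x)
      = Lp_norm_pow p (\<lambda>x. indicator {-a..a} x * G x) + Lp_norm_pow p (\<lambda>x. indicator (-{-b..b}) x * G x)"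
    using Lp_norm_pow_split[of "\<lambda>x. indicator (-J) x * G x" "{-a..a}" p] by simp
  also have "\<dots> < ennreal (\<delta> + \<delta>)"
    using inner outer by (rule add_mono_ennreal)
  finally show remainder: "Lp_norm_pow p (\<lambda>x. indicator (-J) x * G x) < ennreal (2 * \<delta>)"
    by simp
  show "Lp_norm_pow p (\<lambda>x. indicator J x * G x) \<le> 1"
    using split by (metis le_iff_add)
  show "ennreal (1/2) \<le> Lp_norm_pow p (\<lambda>x. indicator J x * G x)"
  proof (rule ccontr)
    assume "\<not> ?thesis"
    then have "1 < ennreal (1/2 + 2 * \<delta>)"
      using add_mono_ennreal[OF _ remainder] split by (metis not_le)
    also have "\<dots> \<le> 1"
      using \<open>\<delta> \<le> 1/4\<close> by simp
    finally show False by simp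
  qed
qed

lemma gliding_hump_sequence:
  assumes "p > 0" and X: "closed_Lp_subspace p X" and "\<And>n. \<delta> n > 0"
    and escapes: "\<And>c \<epsilon>. c > 0 \<Longrightarrow> \<epsilon> > 0 \<Longrightarrow>
       \<exists>f\<in>X. Lp_norm_pow p f = 1 \<and> Lp_norm_pow p (\<lambda>x. indicator {-c..c} x * f x) < ennreal \<epsilon>"
  obtains g :: "nat \<Rightarrow> real \<Rightarrow> real" and c :: "nat \<Rightarrow> real"
  where "\<And>n. g n \<in> X" "\<And>n. Lp_norm_pow p (g n) = 1" "\<And>n. c n \<le> c (Suc n)"
    "\<And>n. Lp_norm_pow p (\<lambda>x. indicator {-c n..c n} x * g n x) < ennreal (\<delta> n)"
    "\<And>n. Lp_norm_pow p (\<lambda>x. indicator (-{-c (Suc n)..c (Suc n)}) x * g n x) < ennreal (\<delta> n)"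
proof -
  define P where "P n cf \<longleftrightarrow> fst cf > 0 \<and> snd cf \<in> X \<and> Lp_norm_pow p (snd cf) = 1
      \<and> Lp_norm_pow p (\<lambda>x. indicator {-fst cf..fst cf} x * snd cf x) < ennreal (\<delta> n)"
    for n and cf :: "real \<times> (real \<Rightarrow> real)"
  define Q where "Q n cf cf' \<longleftrightarrow> fst cf \<le> fst cf'
      \<and> Lp_norm_pow p (\<lambda>x. indicator (-{-fst cf'..fst cf'}) x * snd cf x) < ennreal (\<delta> n)"
    for n and cf cf' :: "real \<times> (real \<Rightarrow> real)"
  have "\<exists>cf. \<forall>n. P n (cf n) \<and> Q n (cf n) (cf (Suc n))"
  proof (rule dependent_nat_choice)
    obtain f where "f \<in> X" "Lp_norm_pow p f = 1"
      "Lp_norm_pow p (\<lambda>x. indicator {-1..1} x * f x) < ennreal (\<delta> 0)"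
      using escapes[of 1 "\<delta> 0"] \<open>\<delta> 0 > 0\<close> by auto
    then show "\<exists>cf. P 0 cf"
      by (intro exI[of _ "(1, f)"]) (simp add: P_def)
  next
    fix cf n assume "P n cf"
    then obtain c f where cf: "cf = (c, f)" "c > 0" "f \<in> X" by (cases cf) (auto simp: P_def)
    have f: "f \<in> borel_measurable lborel" "Lp_norm_pow p f < \<infinity>"
      using closed_Lp_subspace_subset[OF X] \<open>f \<in> X\<close> Lp_space_measurable Lp_norm_pow_finite by auto
    obtain d where "d \<ge> c" "Lp_norm_pow p (\<lambda>x. indicator (-{-d..d}) x * f x) < ennreal (\<delta> n)"
      using Lp_norm_pow_outside_interval_small[OF f \<open>\<delta> n > 0\<close>] by blast
    moreover obtain f' where "f' \<in> X" "Lp_norm_pow p f' = 1"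
      "Lp_norm_pow p (\<lambda>x. indicator {-d..d} x * f' x) < ennreal (\<delta> (Suc n))"
      using escapes[of d "\<delta> (Suc n)"] \<open>d \<ge> c\<close> \<open>c > 0\<close> \<open>\<delta> (Suc n) > 0\<close> by auto
    ultimately show "\<exists>cf'. P (Suc n) cf' \<and> Q n cf cf'"
      using cf by (intro exI[of _ "(d, f')"]) (auto simp: P_def Q_def)
  qed
  then obtain cf where "\<And>n. P n (cf n)" "\<And>n. Q n (cf n) (cf (Suc n))"
    by blast
  then show ?thesis
    by (intro that[of "\<lambda>n. snd (cf n)" "\<lambda>n. fst (cf n)"]) (auto simp: P_def Q_def)
qed

lemma contains_lp_copy_if_mass_escapes:
  assumes "p > 0" and X: "closed_Lp_subspace p X"
    and escapes: "\<And>c \<epsilon>. c > 0 \<Longrightarrow> \<epsilon> > 0 \<Longrightarrow>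
       \<exists>f\<in>X. Lp_norm_pow p f = 1 \<and> Lp_norm_pow p (\<lambda>x. indicator {-c..c} x * f x) < ennreal \<epsilon>"
  shows "contains_lp_copy p X"
proof -
  \<comment> \<open>\<open>2 \<delta> n\<close> is exactly the remainder bound required of \<open>g\<^sub>n\<close> below\<close>
  define \<delta> where "\<delta> n = perturbation_const p * dyadic_weight n powr p * dyadic_weight n / 2" for n
  have "\<delta> n > 0" for n
    using perturbation_const_pos[of p] dyadic_weight_pos[of n] by (simp add: \<delta>_def)
  have \<delta>_le: "\<delta> n \<le> 1/4" for n
  proof -
    have "perturbation_const p \<le> 1"
      using ge_one_powr_ge_zero[of 2 p] \<open>p > 0\<close> by (simp add: perturbation_const_def powr_minus_divide)
    moreover have "dyadic_weight n powr p \<le> 1" "dyadic_weight n \<le> 1/2"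
      using \<open>p > 0\<close> dyadic_weight_pos[of n] dyadic_weight_le_half[of n] by (simp_all add: powr_le1)
    ultimately have "perturbation_const p * dyadic_weight n powr p * dyadic_weight n \<le> 1 * 1 * (1/2)"
      using perturbation_const_pos[of p] dyadic_weight_pos[of n] by (intro mult_mono) auto
    then show ?thesis by (simp add: \<delta>_def mult_ac)
  qed
  obtain g c where gX: "\<And>n. g n \<in> X" and norm: "\<And>n. Lp_norm_pow p (g n) = 1"
    and c_mono: "\<And>n. c n \<le> c (Suc n)"
    and inner: "\<And>n. Lp_norm_pow p (\<lambda>x. indicator {-c n..c n} x * g n x) < ennreal (\<delta> n)"
    and outer: "\<And>n. Lp_norm_pow p (\<lambda>x. indicator (-{-c (Suc n)..c (Suc n)}) x * g n x) < ennreal (\<delta> n)"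
    using gliding_hump_sequence[where \<delta>=\<delta>, OF \<open>p > 0\<close> X \<open>\<And>n. \<delta> n > 0\<close> escapes] by blast
  define A where "A n = {x. c n < \<bar>x\<bar> \<and> \<bar>x\<bar> \<le> c (Suc n)}" for n
  note annulus = Lp_norm_pow_annulus[OF closed_Lp_subspace_measurable[OF X gX] c_mono norm inner outer
      \<delta>_le, folded A_def]
  have A_sets: "A n \<in> sets lborel" for n
    unfolding A_def by measurable
  have "disjoint_family A"
    unfolding disjoint_family_on_def
  proof (intro ballI impI)
    fix m n :: nat assume "m \<noteq> n"
    then have "Suc m \<le> n \<or> Suc n \<le> m"
      by linarith
    then have "c (Suc m) \<le> c n \<or> c (Suc n) \<le> c m"
      using lift_Suc_mono_le[of c, OF c_mono] by blast
    then show "A m \<inter> A n = {}"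
      by (auto simp: A_def)
  qed
  show ?thesis
  proof (rule contains_lp_copy_if_almost_disjoint[OF \<open>p > 0\<close> X gX _ \<open>disjoint_family A\<close>])
    show "Lp_norm_pow p (\<lambda>x. indicator (-A n) x * g n x)
        \<le> ennreal (perturbation_const p * dyadic_weight n powr p * dyadic_weight n)" for n
      using annulus(3)[of n] by (simp add: \<delta>_def)
  qed (use annulus A_sets in auto)
qed

theorem lemma2p13:
  fixes p :: real and X :: "(real \<Rightarrow> real) set"
  assumes "1 \<le> p" and "p \<noteq> 2"
    and "closed_Lp_subspace p X"
    and "\<not> contains_lp_copy p X"
  shows "\<exists>c>0. \<exists>C. \<forall>f\<in>X.
           Lp_norm p (\<lambda>x. indicator {-c..c} x * f x) \<le> Lp_norm p f \<and>
           Lp_norm p f \<le> C * Lp_norm p (\<lambda>x. indicator {-c..c} x * f x)"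
proof (rule ccontr)
  assume "\<not> ?thesis"
  moreover have "p > 0"
    using \<open>1 \<le> p\<close> by simp
  ultimately have "\<exists>f\<in>X. Lp_norm_pow p f = 1 \<and> Lp_norm_pow p (\<lambda>x. indicator {-c..c} x * f x) < ennreal \<epsilon>"
    if "c > 0" "\<epsilon> > 0" for c \<epsilon>
    using exists_normalized_small_on_interval[OF \<open>p > 0\<close> \<open>closed_Lp_subspace p X\<close> \<open>\<epsilon> > 0\<close>] that
    by blast
  then have "contains_lp_copy p X"
    by (rule contains_lp_copy_if_mass_escapes[OF \<open>p > 0\<close> \<open>closed_Lp_subspace p X\<close>])
  with \<open>\<not> contains_lp_copy p X\<close> show False ..
qed

end
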